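(* Let $K\in\mathbb N$, $\delta\in(0,1)$, and for each $i\in[K]$ let $C_i:[0,1]\to 2^{\Theta_i}$ be a nonincreasing, upper semicontinuous confidence-interval constructor such that $C_i(\alpha)$ is a $(1-\alpha)$-CI for $\theta_i$. Let $C_i^{\mathrm{cal}}$ be the e-CI constructor obtained by calibrating $C_i$ with $f^{\mathrm{BY}(\delta,K)}$, i.e. $C_i^{\mathrm{cal}}(\alpha)=\{\theta\in\Theta_i: f^{\mathrm{BY}(\delta,K)}(P_i^{\mathrm{dual}}(\theta))<1/\alpha\}$ where $P_i^{\mathrm{dual}}(\theta)=\inf\{\alpha\in[0,1]:\theta\notin C_i(\alpha)\}$. Then for any selected set $S\subseteq[K]$, the BY procedure under arbitrary dependence at level $\delta$, which reports $C_i(\delta|S|/(K\ell_K))$ for $i\in S$, outputs the same intervals as the e-BY procedure at level $\delta$ applied to $C_i^{\mathrm{cal}}$, which reports $C_i^{\mathrm{cal}}(\delta|S|/K)$ for $i\in S$.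
   Context: $\ell_K=\sum_{k=1}^K1/k$. The calibrator is $f^{\mathrm{BY}(\delta,K)}(x)=K/(\delta\lceil K\ell_K x/\delta\rceil)$ for $x\le\delta/\ell_K$ and $0$ for $x>\delta/\ell_K$; a calibrator is a nonincreasing $f:[0,1]\to[0,\infty]$ with $\int_0^1 f\le1$. *)

theory Defs
  imports "HOL-Probability.Probability"
begin

definition harm :: "nat \<Rightarrow> real" where
  "harm K = (\<Sum>k=1..K. 1 / real k)"

text \<open>The BY calibrator; values in [0,\<infinity>] (ereal), so f(0) = K/(\<delta>*0) = \<infinity>.\<close>
definition f_BY :: "real \<Rightarrow> nat \<Rightarrow> real \<Rightarrow> ereal" where
  "f_BY \<delta> K x =
     (if x \<le> \<delta> / harm K
      then ereal (real K) / ereal (\<delta> * real_of_int \<lceil>real K * harm K * x / \<delta>\<rceil>)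
      else 0)"

definition P_dual :: "(real \<Rightarrow> 'a set) \<Rightarrow> 'a \<Rightarrow> real" where
  "P_dual C \<theta> = (if {\<alpha>\<in>{0..1}. \<theta> \<notin> C \<alpha>} = {} then 1 else Inf {\<alpha>\<in>{0..1}. \<theta> \<notin> C \<alpha>})"

text \<open>Calibrated (e-CI) constructor: C^cal(\<alpha>) = {\<theta> \<in> \<Theta> : f(P_dual(\<theta>)) < 1/\<alpha>} (1/0 = \<infinity> in ereal).\<close>
definition calibrate :: "(real \<Rightarrow> ereal) \<Rightarrow> 'a set \<Rightarrow> (real \<Rightarrow> 'a set) \<Rightarrow> real \<Rightarrow> 'a set" where
  "calibrate f \<Theta> C \<alpha> = {\<theta>\<in>\<Theta>. f (P_dual C \<theta>) < 1 / ereal \<alpha>}"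

definition nonincr_ci :: "(real \<Rightarrow> 'a set) \<Rightarrow> bool" where
  "nonincr_ci C \<longleftrightarrow> (\<forall>\<alpha> \<beta>. 0 \<le> \<alpha> \<longrightarrow> \<alpha> \<le> \<beta> \<longrightarrow> \<beta> \<le> 1 \<longrightarrow> C \<beta> \<subseteq> C \<alpha>)"

text \<open>Upper semicontinuity: for each \<theta>, the map \<alpha> \<mapsto> indicator(\<theta> \<notin> C \<alpha>) is upper
  semicontinuous on [0,1], i.e. the set {\<alpha>\<in>[0,1]. \<theta> \<notin> C \<alpha>} is closed.\<close>
definition usc_ci :: "(real \<Rightarrow> 'a set) \<Rightarrow> bool" where
  "usc_ci C \<longleftrightarrow> (\<forall>\<theta>. closed {\<alpha>\<in>{0..1}. \<theta> \<notin> C \<alpha>})"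

definition is_CI :: "'w measure \<Rightarrow> 'a \<Rightarrow> ('w \<Rightarrow> 'a set) \<Rightarrow> real \<Rightarrow> bool" where
  "is_CI M \<theta> C \<alpha> \<longleftrightarrow>
     {w\<in>space M. \<theta> \<in> C w} \<in> sets M \<and> measure M {w\<in>space M. \<theta> \<in> C w} \<ge> 1 - \<alpha>"

end

theory Submission
  imports Defs
begin

text \<open>For a nonincreasing, upper semicontinuous constructor the set of levels at which
  \<open>\<theta>\<close> is excluded is a closed up-set of \<open>[0,1]\<close>, so it equals \<open>[P_dual C \<theta>, 1]\<close>; hence for
  \<open>a < 1\<close> we have \<open>\<theta> \<in> C a\<close> iff \<open>a < P_dual C \<theta>\<close>. The BY calibrator is a step function,
  equal to \<open>K/(\<delta> n)\<close> on \<open>((n-1)\<delta>/(K \<ell>\<^sub>K), n\<delta>/(K \<ell>\<^sub>K)]\<close> and \<open>0\<close> beyond \<open>\<delta>/\<ell>\<^sub>K\<close>, so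
  \<open>f(p) < K/(\<delta> s)\<close> iff \<open>p > \<delta> s/(K \<ell>\<^sub>K)\<close> for integers \<open>1 \<le> s \<le> K\<close>. Thus both procedures
  describe the same threshold on the dual p-value.\<close>

lemma harm_ge_1: "1 \<le> K \<Longrightarrow> 1 \<le> harm K"
  unfolding harm_def by (rule order.trans[OF _ member_le_sum[of 1]]) auto

lemma P_dual_bounds: "0 \<le> P_dual C \<theta>" "P_dual C \<theta> \<le> 1"
proof -
  define A where "A = {\<alpha>\<in>{0..1}. \<theta> \<notin> C \<alpha>}"
  have "0 \<le> Inf A \<and> Inf A \<le> 1" if "A \<noteq> {}"
  proof -
    obtain \<alpha> where "\<alpha> \<in> A" using \<open>A \<noteq> {}\<close> by blast
    moreover have "bdd_below A" unfolding A_def by (rule bdd_belowI[of _ 0]) auto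
    ultimately have "Inf A \<le> 1" using cInf_lower[of \<alpha> A] unfolding A_def by auto
    moreover have "0 \<le> Inf A" using that by (rule cInf_greatest) (auto simp: A_def)
    ultimately show ?thesis by simp
  qed
  then show "0 \<le> P_dual C \<theta>" "P_dual C \<theta> \<le> 1"
    unfolding P_dual_def A_def[symmetric] by auto
qed

lemma mem_iff_less_P_dual:
  assumes "nonincr_ci C" "usc_ci C" "0 \<le> a" "a < 1"
  shows "\<theta> \<in> C a \<longleftrightarrow> a < P_dual C \<theta>"
proof -
  define A where "A = {\<alpha>\<in>{0..1}. \<theta> \<notin> C \<alpha>}"
  have excluded_iff: "\<theta> \<notin> C a \<longleftrightarrow> a \<in> A" using assms(3,4) unfolding A_def by auto
  show ?thesis
  proof (cases "A = {}")
    case True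
    then show ?thesis using excluded_iff assms(4) unfolding P_dual_def A_def[symmetric] by simp
  next
    case False
    have "bdd_below A" unfolding A_def by (rule bdd_belowI[of _ 0]) auto
    moreover have "closed A" using assms(2) unfolding usc_ci_def A_def by blast
    ultimately have Inf_in: "Inf A \<in> A" by (rule closed_contains_Inf[OF False])
    have up_closed: "\<beta> \<in> A" if "\<alpha> \<in> A" "\<alpha> \<le> \<beta>" "\<beta> \<le> 1" for \<alpha> \<beta>
      using that assms(1) unfolding A_def nonincr_ci_def by auto
    have "a \<in> A \<longleftrightarrow> Inf A \<le> a"
      using cInf_lower[OF _ \<open>bdd_below A\<close>, of a] up_closed[OF Inf_in, of a] assms(4) by auto
    moreover have "P_dual C \<theta> = Inf A" using False unfolding P_dual_def A_def[symmetric] by simp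
    ultimately show ?thesis using excluded_iff by auto
  qed
qed

lemma calibrate_eq_threshold:
  assumes "nonincr_ci C" "usc_ci C" "0 \<le> a" "a < 1" "C a \<subseteq> \<Theta>"
    and "\<And>p. 0 \<le> p \<Longrightarrow> p \<le> 1 \<Longrightarrow> f p < 1 / ereal \<beta> \<longleftrightarrow> a < p"
  shows "calibrate f \<Theta> C \<beta> = C a"
proof (rule set_eqI)
  fix t
  have "t \<in> C a \<longleftrightarrow> a < P_dual C t" by (rule mem_iff_less_P_dual[OF assms(1-4)])
  moreover have "f (P_dual C t) < 1 / ereal \<beta> \<longleftrightarrow> a < P_dual C t"
    by (rule assms(6)[OF P_dual_bounds])
  ultimately show "t \<in> calibrate f \<Theta> C \<beta> \<longleftrightarrow> t \<in> C a"
    using assms(5) unfolding calibrate_def by auto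
qed

lemma ereal_divide_less_iff:
  fixes c x y :: real
  assumes "0 < c" "0 \<le> x" "0 < y"
  shows "ereal c / ereal x < ereal (c / y) \<longleftrightarrow> y < x"
proof (cases "x = 0")
  case True
  then show ?thesis using assms by simp
next
  case False
  then have "ereal c / ereal x = ereal (c / x)" using assms by simp
  then show ?thesis using assms False by (simp add: field_simps)
qed

lemma f_BY_less_iff:
  fixes \<delta> p :: real and s K :: nat
  assumes "0 < \<delta>" "1 \<le> s" "s \<le> K" "0 \<le> p"
  shows "f_BY \<delta> K p < 1 / ereal (\<delta> * s / K) \<longleftrightarrow> \<delta> * s / (K * harm K) < p"
proof -
  define L where "L = harm K"
  have "1 \<le> L" "0 < real K" "0 < real s" using harm_ge_1 assms(2,3) unfolding L_def by auto
  have inverse: "1 / ereal (\<delta> * s / K) = ereal (K / (\<delta> * s))"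
    using assms(1) \<open>0 < real K\<close> \<open>0 < real s\<close> by (simp add: one_ereal_def)
  show ?thesis
  proof (cases "p \<le> \<delta> / L")
    case False
    moreover have "\<delta> * s / (K * L) \<le> \<delta> / L"
      using assms \<open>1 \<le> L\<close> \<open>0 < real K\<close> by (simp add: field_simps)
    ultimately show ?thesis
      using assms(1) \<open>0 < real K\<close> \<open>0 < real s\<close> inverse
      by (simp add: f_BY_def L_def[symmetric] zero_ereal_def)
  next
    case True
    define n where "n = \<lceil>K * L * p / \<delta>\<rceil>"
    have "0 \<le> K * L * p / \<delta>" using assms(1,4) \<open>1 \<le> L\<close> by simp
    then have "0 \<le> n" unfolding n_def by linarith
    have "f_BY \<delta> K p < 1 / ereal (\<delta> * s / K) \<longleftrightarrow> \<delta> * s < \<delta> * n"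
      using True inverse ereal_divide_less_iff[of K "\<delta> * n" "\<delta> * s"]
        assms(1) \<open>0 \<le> n\<close> \<open>0 < real K\<close> \<open>0 < real s\<close>
      by (simp add: f_BY_def L_def[symmetric] n_def)
    also have "\<dots> \<longleftrightarrow> int s < n" using assms(1) by simp linarith
    also have "\<dots> \<longleftrightarrow> s < K * L * p / \<delta>" unfolding n_def by (simp add: less_ceiling_iff)
    also have "\<dots> \<longleftrightarrow> \<delta> * s / (K * L) < p"
      using assms(1) \<open>1 \<le> L\<close> \<open>0 < real K\<close> by (simp add: field_simps)
    finally show ?thesis unfolding L_def .
  qed
qed

theorem corollary1:
  fixes M :: "'w measure" and K :: nat and \<delta> :: real
    and \<Theta> :: "nat \<Rightarrow> 'a set" and \<theta> :: "nat \<Rightarrow> 'a"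
    and C :: "'w \<Rightarrow> nat \<Rightarrow> real \<Rightarrow> 'a set"
    and S :: "nat set" and w :: 'w
  assumes "prob_space M"
    and "0 < \<delta>" and "\<delta> < 1"
    and "\<forall>i\<in>{1..K}. \<theta> i \<in> \<Theta> i"
    and "\<forall>i\<in>{1..K}. \<forall>v\<in>space M. nonincr_ci (C v i) \<and> usc_ci (C v i)
                                     \<and> (\<forall>\<alpha>\<in>{0..1}. C v i \<alpha> \<subseteq> \<Theta> i)"
    and "\<forall>i\<in>{1..K}. \<forall>\<alpha>\<in>{0..1}. is_CI M (\<theta> i) (\<lambda>v. C v i \<alpha>) \<alpha>"
    and "S \<subseteq> {1..K}"
    and "w \<in> space M"
  shows "\<forall>i\<in>S. C w i (\<delta> * real (card S) / (real K * harm K))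
               = calibrate (f_BY \<delta> K) (\<Theta> i) (C w i) (\<delta> * real (card S) / real K)"
proof
  fix i assume "i \<in> S"
  then have "i \<in> {1..K}" using assms(7) by auto
  have "finite S" using assms(7) finite_subset by blast
  then have "1 \<le> card S" using \<open>i \<in> S\<close> by (simp add: Suc_le_eq card_gt_0_iff) blast
  have "card S \<le> K" using card_mono[OF _ assms(7)] by simp
  define a where "a = \<delta> * card S / (K * harm K)"
  have "1 \<le> harm K" "0 < real K" using harm_ge_1 \<open>1 \<le> card S\<close> \<open>card S \<le> K\<close> by auto
  then have "0 \<le> a" "a \<le> \<delta> / harm K"
    using assms(2) \<open>card S \<le> K\<close> by (auto simp: a_def field_simps)
  moreover have "\<delta> / harm K < 1" using assms(2,3) \<open>1 \<le> harm K\<close> by (simp add: field_simps)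
  ultimately have "a < 1" by simp
  have "calibrate (f_BY \<delta> K) (\<Theta> i) (C w i) (\<delta> * card S / K) = C w i a"
  proof (rule calibrate_eq_threshold)
    show "nonincr_ci (C w i)" "usc_ci (C w i)" "C w i a \<subseteq> \<Theta> i"
      using assms(5,8) \<open>i \<in> {1..K}\<close> \<open>0 \<le> a\<close> \<open>a < 1\<close> by auto
    show "f_BY \<delta> K p < 1 / ereal (\<delta> * card S / K) \<longleftrightarrow> a < p" if "0 \<le> p" for p
      unfolding a_def by (rule f_BY_less_iff[OF assms(2) \<open>1 \<le> card S\<close> \<open>card S \<le> K\<close> that])
  qed fact+
  then show "C w i (\<delta> * card S / (K * harm K))
      = calibrate (f_BY \<delta> K) (\<Theta> i) (C w i) (\<delta> * card S / K)" unfolding a_def ..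
qed

end
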